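(* Let $F \subseteq \mathbb{H}$ intersect every wedge in $\mathbb{H}$. Then there is $u \in \mathbb{S}^+$ such that $T_u(F)$ is dense in $\mathbb{R}$.
   Context: $\mathbb{H} = \{(x,y) \in \mathbb{R}^2 : y > 0\}$, $\mathbb{S}$ is the unit circle in $\mathbb{R}^2$, and $\mathbb{S}^+ = \mathbb{S} \cap \mathbb{H}$. For $u = (u_1,u_2) \in \mathbb{S}$, $T_u : \mathbb{R}^2 \to \mathbb{R}$ is the orthogonal projection parallel to $u$, i.e. $T_u(x) = \langle x,(u_2,-u_1)\rangle$, so $T_u(x) = T_u(y)$ iff $x-y \in \mathbb{R}u$. A wedge in $\mathbb{H}$ is a set of the form $\{tv : t > s, v \in \mathbb{S}, \|v-u\| < \varepsilon\}$ for some $u \in \mathbb{S}^+$ and $s,\varepsilon > 0$, which is contained in $\mathbb{H}$. *)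

theory Defs
  imports "HOL-Analysis.Analysis"
begin

definition upper_half :: "(real \<times> real) set" where
  "upper_half = {p. snd p > 0}"

definition circ :: "(real \<times> real) set" where
  "circ = sphere 0 1"

definition circ_plus :: "(real \<times> real) set" where
  "circ_plus = circ \<inter> upper_half"

text \<open>Projection parallel to u: T_u(x) = <x, (u2, -u1)>.\<close>
definition proj_par :: "real \<times> real \<Rightarrow> real \<times> real \<Rightarrow> real" where
  "proj_par u x = x \<bullet> (snd u, - fst u)"

definition is_wedge :: "(real \<times> real) set \<Rightarrow> bool" where
  "is_wedge W \<longleftrightarrow> (\<exists>u s \<epsilon>. u \<in> circ_plus \<and> s > 0 \<and> \<epsilon> > 0 \<and>
      W = {t *\<^sub>R v | t v. t > s \<and> v \<in> circ \<and> norm (v - u) < \<epsilon>}) \<and> W \<subseteq> upper_half"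

end

theory Submission
  imports Defs
begin

text \<open>Parametrise the directions of \<open>\<S>\<^sup>+\<close> by angles \<open>\<theta>\<close> and call \<open>\<theta>\<close> good for an open interval
  \<open>(q, r)\<close> if \<open>T\<^sub>\<theta>(F)\<close> meets it. For fixed \<open>x\<close> the map \<open>\<theta> \<mapsto> T\<^sub>\<theta>(x)\<close> is continuous, so the
  good angles form an open set. They are also dense: a thin, far-out wedge around the
  direction \<open>(\<alpha> + \<beta>)/2\<close> contains a point \<open>x \<in> F\<close> with \<open>T\<^sub>\<alpha>(x) \<ll> 0 \<ll> T\<^sub>\<beta>(x)\<close>, and the
  intermediate value theorem yields an angle in \<open>[\<alpha>, \<beta>]\<close> that is good for \<open>(q, r)\<close>.
  By the Baire category theorem some angle is good for all countably many rational
  intervals, i.e. its projection of \<open>F\<close> is dense.\<close>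

lemma proj_par_diff: "proj_par u (x - y) = proj_par u x - proj_par u y"
  by (simp add: proj_par_def inner_diff_left)

lemma proj_par_scaleR: "proj_par u (t *\<^sub>R x) = t * proj_par u x"
  by (simp add: proj_par_def)

lemma abs_proj_par_le: "\<bar>proj_par u x\<bar> \<le> norm u * norm x"
proof -
  have "\<bar>proj_par u x\<bar> \<le> norm x * norm (snd u, - fst u)"
    unfolding proj_par_def by (rule Cauchy_Schwarz_ineq2)
  also have "norm (snd u, - fst u) = norm u"
    by (cases u) (simp add: norm_Pair)
  finally show ?thesis by (simp add: mult.commute)
qed

lemma proj_par_cos_sin: "proj_par (cos \<theta>, sin \<theta>) x = fst x * sin \<theta> - snd x * cos \<theta>"
  by (cases x) (simp add: proj_par_def inner_Pair)

lemma proj_par_cos_sin_cos_sin: "proj_par (cos \<theta>, sin \<theta>) (cos \<gamma>, sin \<gamma>) = sin (\<theta> - \<gamma>)"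
  by (simp add: proj_par_cos_sin sin_diff)

lemma proj_par_near_direction:
  "\<bar>proj_par (cos \<theta>, sin \<theta>) v - sin (\<theta> - \<gamma>)\<bar> \<le> norm (v - (cos \<gamma>, sin \<gamma>))"
  using abs_proj_par_le [of "(cos \<theta>, sin \<theta>)" "v - (cos \<gamma>, sin \<gamma>)"]
  by (simp add: proj_par_diff proj_par_cos_sin_cos_sin norm_Pair)

lemma continuous_on_proj_par_cos_sin: "continuous_on A (\<lambda>\<theta>. proj_par (cos \<theta>, sin \<theta>) x)"
  unfolding proj_par_cos_sin by (intro continuous_intros)

lemma cos_sin_in_circ_plus: "0 < \<theta> \<Longrightarrow> \<theta> < pi \<Longrightarrow> (cos \<theta>, sin \<theta>) \<in> circ_plus"
  by (simp add: circ_plus_def circ_def upper_half_def norm_Pair sin_gt_zero)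

lemma is_wedgeI:
  assumes "w \<in> circ_plus" "s > 0" "\<delta> > 0" "\<delta> \<le> snd w"
  shows "is_wedge {t *\<^sub>R v | t v. t > s \<and> v \<in> circ \<and> norm (v - w) < \<delta>}"
proof -
  have "t *\<^sub>R v \<in> upper_half" if "t > s" "norm (v - w) < \<delta>" for t v
  proof -
    have "\<bar>snd v - snd w\<bar> \<le> norm (v - w)"
      by (metis norm_snd_le prod.collapse real_norm_def snd_diff)
    then have "snd v > 0"
      using that assms by linarith
    then show ?thesis
      using that assms by (simp add: upper_half_def)
  qed
  then show ?thesis
    unfolding is_wedge_def using assms by blast
qed

text \<open>The point is taken in a wedge of aperture \<open>\<delta>\<close> around the direction \<open>\<gamma>\<close> halfway between
  \<open>\<alpha>\<close> and \<open>\<beta>\<close>, at distance \<open>d = (\<beta> - \<alpha>)/2\<close> from both; its unit direction \<open>v\<close> then satisfies \<open>T\<^sub>\<alpha>(v) < -sin d / 2\<close> and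
  \<open>T\<^sub>\<beta>(v) > sin d / 2\<close>, and the radius \<open>t > s\<close> scales this beyond \<open>M\<close>.\<close>

lemma wedge_point_with_large_projections:
  fixes F :: "(real \<times> real) set"
  assumes wedges: "\<And>W. is_wedge W \<Longrightarrow> F \<inter> W \<noteq> {}"
    and "0 \<le> \<alpha>" "\<alpha> < \<beta>" "\<beta> \<le> pi"
  obtains x where "x \<in> F" "proj_par (cos \<alpha>, sin \<alpha>) x < - M" "M < proj_par (cos \<beta>, sin \<beta>) x"
proof -
  define d where "d = (\<beta> - \<alpha>) / 2"
  define \<gamma> where "\<gamma> = (\<alpha> + \<beta>) / 2"
  define \<delta> where "\<delta> = min (sin d) (sin \<gamma>) / 2"
  define s where "s = 2 * (\<bar>M\<bar> + 1) / sin d"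
  have "sin d > 0" "sin \<gamma> > 0"
    using assms by (auto simp: d_def \<gamma>_def intro!: sin_gt_zero)
  then have "\<delta> > 0" "\<delta> \<le> sin d / 2" "\<delta> \<le> sin \<gamma>" "s > 0" and s_sin: "s * sin d = 2 * (\<bar>M\<bar> + 1)"
    by (auto simp: \<delta>_def s_def)
  have "(cos \<gamma>, sin \<gamma>) \<in> circ_plus"
    using assms by (intro cos_sin_in_circ_plus) (auto simp: \<gamma>_def)
  then have "is_wedge {t *\<^sub>R v | t v. t > s \<and> v \<in> circ \<and> norm (v - (cos \<gamma>, sin \<gamma>)) < \<delta>}"
    using \<open>s > 0\<close> \<open>\<delta> > 0\<close> \<open>\<delta> \<le> sin \<gamma>\<close> by (intro is_wedgeI) auto
  then obtain t v where "t *\<^sub>R v \<in> F" "t > s" and v: "norm (v - (cos \<gamma>, sin \<gamma>)) < \<delta>"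
    using wedges by blast
  have "\<alpha> - \<gamma> = - d" "\<beta> - \<gamma> = d"
    by (simp_all add: d_def \<gamma>_def field_simps)
  then have "sin (\<alpha> - \<gamma>) = - sin d" "sin (\<beta> - \<gamma>) = sin d"
    by simp_all
  moreover have near: "\<bar>proj_par (cos \<theta>, sin \<theta>) v - sin (\<theta> - \<gamma>)\<bar> < sin d / 2" for \<theta>
    using proj_par_near_direction [of \<theta> v \<gamma>] v \<open>\<delta> \<le> sin d / 2\<close> by linarith
  ultimately have "proj_par (cos \<alpha>, sin \<alpha>) v < - (sin d / 2)" "sin d / 2 < proj_par (cos \<beta>, sin \<beta>) v"
    using near [of \<alpha>, unfolded abs_less_iff] near [of \<beta>, unfolded abs_less_iff] by linarith+
  moreover have "t > 0"
    using \<open>t > s\<close> \<open>s > 0\<close> by linarith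
  ultimately have "t * proj_par (cos \<alpha>, sin \<alpha>) v < t * - (sin d / 2)"
    and "t * (sin d / 2) < t * proj_par (cos \<beta>, sin \<beta>) v"
    by (metis mult_strict_left_mono)+
  moreover have "\<bar>M\<bar> < t * (sin d / 2)"
    using s_sin mult_strict_right_mono [OF \<open>t > s\<close> \<open>sin d > 0\<close>] by simp
  ultimately have "t * proj_par (cos \<alpha>, sin \<alpha>) v < - M" "M < t * proj_par (cos \<beta>, sin \<beta>) v"
    by linarith+
  then show ?thesis
    using that \<open>t *\<^sub>R v \<in> F\<close> by (simp add: proj_par_scaleR)
qed

definition hitting_directions :: "(real \<times> real) set \<Rightarrow> real set \<Rightarrow> real set" where
  "hitting_directions F U = {\<theta>. \<exists>x\<in>F. proj_par (cos \<theta>, sin \<theta>) x \<in> U}"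

lemma open_hitting_directions:
  assumes "open U"
  shows "open (hitting_directions F U)"
proof -
  have "hitting_directions F U = (\<Union>x\<in>F. (\<lambda>\<theta>. proj_par (cos \<theta>, sin \<theta>) x) -` U)"
    by (auto simp: hitting_directions_def)
  also have "open \<dots>"
    unfolding proj_par_cos_sin
    by (intro open_UN ballI continuous_open_vimage assms) (auto intro!: continuous_intros)
  finally show ?thesis .
qed

lemma hitting_directions_meets_interval:
  fixes F :: "(real \<times> real) set"
  assumes wedges: "\<And>W. is_wedge W \<Longrightarrow> F \<inter> W \<noteq> {}"
    and "0 \<le> \<alpha>" "\<alpha> < \<beta>" "\<beta> \<le> pi" "q < r"
  shows "{\<alpha>..\<beta>} \<inter> hitting_directions F {q<..<r} \<noteq> {}"
proof -
  define m where "m = (q + r) / 2"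
  obtain x where "x \<in> F" "proj_par (cos \<alpha>, sin \<alpha>) x < - \<bar>m\<bar>" "\<bar>m\<bar> < proj_par (cos \<beta>, sin \<beta>) x"
    using wedge_point_with_large_projections [OF assms(1-4)] .
  then have "proj_par (cos \<alpha>, sin \<alpha>) x \<le> m" "m \<le> proj_par (cos \<beta>, sin \<beta>) x"
    using abs_ge_self [of m] abs_ge_minus_self [of m] by linarith+
  then obtain \<theta> where "\<alpha> \<le> \<theta>" "\<theta> \<le> \<beta>" "proj_par (cos \<theta>, sin \<theta>) x = m"
    using IVT' [OF _ _ less_imp_le [OF \<open>\<alpha> < \<beta>\<close>] continuous_on_proj_par_cos_sin] by blast
  moreover have "m \<in> {q<..<r}"
    using \<open>q < r\<close> by (simp add: m_def)
  ultimately have "\<theta> \<in> {\<alpha>..\<beta>} \<inter> hitting_directions F {q<..<r}"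
    using \<open>x \<in> F\<close> unfolding hitting_directions_def by auto
  then show ?thesis
    by blast
qed

lemma interval_subset_closure_if_meets_subintervals:
  fixes a b :: real
  assumes "a < b" and meets: "\<And>\<alpha> \<beta>. a \<le> \<alpha> \<Longrightarrow> \<alpha> < \<beta> \<Longrightarrow> \<beta> \<le> b \<Longrightarrow> {\<alpha>..\<beta>} \<inter> H \<noteq> {}"
  shows "{a..b} \<subseteq> closure ({a..b} \<inter> H)"
proof
  fix \<theta> assume "\<theta> \<in> {a..b}"
  show "\<theta> \<in> closure ({a..b} \<inter> H)"
    unfolding closure_approachable
  proof (intro allI impI)
    fix e :: real assume "e > 0"
    define \<alpha> where "\<alpha> = max (\<theta> - e / 2) a"
    define \<beta> where "\<beta> = min (\<theta> + e / 2) b"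
    have "a \<le> \<alpha>" "\<alpha> < \<beta>" "\<beta> \<le> b"
      using \<open>\<theta> \<in> {a..b}\<close> \<open>a < b\<close> \<open>e > 0\<close> by (auto simp: \<alpha>_def \<beta>_def)
    then obtain \<eta> where "\<eta> \<in> {\<alpha>..\<beta>}" "\<eta> \<in> H"
      using meets by blast
    moreover have "{\<alpha>..\<beta>} \<subseteq> {a..b} \<inter> ball \<theta> e"
      using \<open>e > 0\<close> by (auto simp: \<alpha>_def \<beta>_def dist_real_def)
    ultimately have "\<eta> \<in> {a..b} \<inter> H" "dist \<eta> \<theta> < e"
      by (auto simp: dist_commute)
    then show "\<exists>\<eta>\<in>{a..b} \<inter> H. dist \<eta> \<theta> < e"
      by blast
  qed
qed

lemma closure_eq_UNIV_if_meets_rational_intervals: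
  fixes A :: "real set"
  assumes "\<And>q r. q \<in> \<rat> \<Longrightarrow> r \<in> \<rat> \<Longrightarrow> q < r \<Longrightarrow> A \<inter> {q<..<r} \<noteq> {}"
  shows "closure A = UNIV"
proof -
  have "y \<in> closure A" for y
    unfolding closure_approachable
  proof (intro allI impI)
    fix e :: real assume "e > 0"
    obtain q r where "q \<in> \<rat>" "r \<in> \<rat>" "y - e < q" "q < y" "y < r" "r < y + e"
      using Rats_dense_in_real [of "y - e" y] Rats_dense_in_real [of y "y + e"] \<open>e > 0\<close> by auto
    then show "\<exists>z\<in>A. dist z y < e"
      using assms [of q r] by (fastforce simp: dist_real_def)
  qed
  then show ?thesis by auto
qed

text \<open>Baire's theorem needs a closed parameter set; \<open>[\<pi>/4, 3\<pi>/4]\<close> is one that stays inside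
  \<open>(0, \<pi>)\<close>, where \<open>(cos \<theta>, sin \<theta>) \<in> \<S>\<^sup>+\<close>.\<close>

lemma direction_hitting_all_rational_intervals:
  fixes F :: "(real \<times> real) set"
  assumes wedges: "\<And>W. is_wedge W \<Longrightarrow> F \<inter> W \<noteq> {}"
  obtains \<theta> where "0 < \<theta>" "\<theta> < pi"
    and "\<And>q r. q \<in> \<rat> \<Longrightarrow> r \<in> \<rat> \<Longrightarrow> q < r \<Longrightarrow> \<theta> \<in> hitting_directions F {q<..<r}"
proof -
  define S where "S = {pi/4 .. 3*pi/4}"
  define I where "I = {(q, r). q \<in> \<rat> \<and> r \<in> \<rat> \<and> (q::real) < r}"
  define \<G> where "\<G> = (\<lambda>(q, r). S \<inter> hitting_directions F {q<..<r}) ` I"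
  have "S \<subseteq> closure (\<Inter>\<G>)"
  proof (rule Baire)
    show "countable \<G>"
      unfolding \<G>_def I_def
      by (intro countable_image countable_subset [OF _ countable_SIGMA]) (auto simp: countable_rat)
  next
    fix T assume "T \<in> \<G>"
    then obtain q r where "q < r" and T: "T = S \<inter> hitting_directions F {q<..<r}"
      by (auto simp: \<G>_def I_def)
    have "openin (top_of_set S) T"
      unfolding T by (intro openin_open_Int open_hitting_directions) simp
    moreover have "S \<subseteq> closure T"
      unfolding T S_def using pi_gt_zero \<open>q < r\<close>
      by (intro interval_subset_closure_if_meets_subintervals hitting_directions_meets_interval [OF wedges]) auto
    ultimately show "openin (top_of_set S) T \<and> S \<subseteq> closure T" ..
  qed (simp add: S_def)
  moreover have "pi / 2 \<in> S"
    using pi_gt_zero by (simp add: S_def)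
  ultimately have "\<Inter>\<G> \<noteq> {}"
    by auto
  then obtain \<theta> where \<theta>: "\<theta> \<in> \<Inter>\<G>"
    by blast
  have hits: "\<theta> \<in> S \<inter> hitting_directions F {q<..<r}" if "(q, r) \<in> I" for q r
    using \<theta> that unfolding \<G>_def by blast
  have "\<theta> \<in> S"
    using hits [of 0 1] by (simp add: I_def)
  then have "0 < \<theta>" "\<theta> < pi"
    using pi_gt_zero unfolding S_def atLeastAtMost_iff by linarith+
  then show ?thesis
    using that hits by (simp add: I_def)
qed

theorem lemma3p2:
  fixes F :: "(real \<times> real) set"
  assumes "F \<subseteq> upper_half"
    and "\<And>W. is_wedge W \<Longrightarrow> F \<inter> W \<noteq> {}"
  shows "\<exists>u \<in> circ_plus. closure (proj_par u ` F) = UNIV"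
proof -
  obtain \<theta> where "0 < \<theta>" "\<theta> < pi"
    and hits: "\<And>q r. q \<in> \<rat> \<Longrightarrow> r \<in> \<rat> \<Longrightarrow> q < r \<Longrightarrow> \<theta> \<in> hitting_directions F {q<..<r}"
    using direction_hitting_all_rational_intervals [OF assms(2)] by blast
  then have "(cos \<theta>, sin \<theta>) \<in> circ_plus"
    by (intro cos_sin_in_circ_plus)
  moreover have "closure (proj_par (cos \<theta>, sin \<theta>) ` F) = UNIV"
  proof (rule closure_eq_UNIV_if_meets_rational_intervals)
    fix q r :: real assume "q \<in> \<rat>" "r \<in> \<rat>" "q < r"
    then show "proj_par (cos \<theta>, sin \<theta>) ` F \<inter> {q<..<r} \<noteq> {}"
      using hits by (fastforce simp: hitting_directions_def)
  qed
  ultimately show ?thesis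
    by blast
qed

end
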